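(* Let $p\ge 2$ and $K\ge 0$ be integers, let $\alpha\in(0,1)$, and let $B>0$ satisfy $\frac{p-1+K}{B^2}\le \alpha<1$. Let $N(l;0,I_p)=(2\pi)^{-p/2}\exp(-\|l\|^2/2)$ denote the standard $p$-dimensional Gaussian density. Then $$\int_{\{\|l\|>B\}} N(l;0,I_p)\,\|l\|^K\,\mathrm{d}l \;\asymp\; \frac{B^{p-2+K}}{(p-2)!!}\,e^{-B^2/2},$$ i.e. the left-hand side is bounded above and below by the right-hand side multiplied by positive constants depending only on $\alpha$ (not on $p$ or $B$).
   Context: $\|\cdot\|$ is the Euclidean norm on $\mathbb{R}^p$; $m!!$ denotes the double factorial, with $0!!=1$. *)

theory Defs
  imports "HOL-Analysis.Analysis"
begin

fun dfact :: "nat \<Rightarrow> nat" where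
  "dfact 0 = 1"
| "dfact (Suc 0) = 1"
| "dfact (Suc (Suc n)) = Suc (Suc n) * dfact n"

text \<open>Points of R^p are represented as functions nat => real on the index set {..<p},
  with Lebesgue measure given by the product measure PiM {..<p} (\<lambda>_. lborel).\<close>
definition enorm :: "nat \<Rightarrow> (nat \<Rightarrow> real) \<Rightarrow> real" where
  "enorm p l = sqrt (\<Sum>i<p. (l i)\<^sup>2)"

definition std_gauss :: "nat \<Rightarrow> (nat \<Rightarrow> real) \<Rightarrow> real" where
  "std_gauss p l = (2 * pi) powr (- real p / 2) * exp (- (enorm p l)\<^sup>2 / 2)"

end

theory Submission
  imports Defs "HOL-Real_Asymp.Real_Asymp"
begin

text \<open>In polar coordinates the integral equals \<open>p \<omega>_p (2\<pi>)^(-p/2) T\<close>, where \<open>\<omega>_p\<close> is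
  the volume of the unit ball, \<open>n = p - 2 + K\<close> and \<open>T\<close> is the Gaussian tail moment
  \<open>\<integral>_B^\<infinity> r^(n+1) exp(-r^2/2) dr\<close>. The factor \<open>p \<omega>_p (2\<pi>)^(-p/2) (p-2)!!\<close> is 2-periodic
  in \<open>p\<close>, equal to 1 for even and to \<open>\<surd>(2/\<pi>)\<close> for odd \<open>p\<close>. Finally
  \<open>B^n exp(-B^2/2) \<le> T \<le> B^n exp(-B^2/2) / (1 - \<alpha>)\<close>: the lower bound because
  \<open>r^(n+1) \<ge> B^n r\<close> for \<open>r \<ge> B\<close>, the upper one because
  \<open>-(r^n exp(-r^2/2))' = (r^(n+1) - n r^(n-1)) exp(-r^2/2)\<close> dominates
  \<open>(1 - \<alpha>) r^(n+1) exp(-r^2/2)\<close> as soon as \<open>n \<le> \<alpha> r^2\<close>.\<close>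

abbreviation lborel_Pi :: "nat \<Rightarrow> (nat \<Rightarrow> real) measure" where
  "lborel_Pi p \<equiv> PiM {..<p} (\<lambda>_. lborel)"

lemma enorm_measurable [measurable]: "enorm p \<in> borel_measurable (lborel_Pi p)"
  unfolding enorm_def by measurable

lemma emeasure_enorm_atMost:
  assumes "1 \<le> p"
  shows "emeasure (lborel_Pi p) {l \<in> space (lborel_Pi p). enorm p l \<le> r} =
    (if r \<le> 0 then 0 else ennreal (unit_ball_vol (real p) * r ^ p))"
proof -
  let ?ball = "\<lambda>r. emeasure (lborel_Pi p) {l \<in> space (lborel_Pi p). enorm p l \<le> r}"
  have ball: "?ball r = ennreal (unit_ball_vol (real p) * r ^ p)" if "0 < r" for r
  proof -
    have "{l \<in> space (lborel_Pi p). enorm p l \<le> r} =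
        {f. sqrt (\<Sum>i\<in>{..<p}. (f i)\<^sup>2) \<le> r} \<inter> space (lborel_Pi p)"
      by (auto simp: enorm_def)
    then show ?thesis
      using emeasure_cball_aux[of "{..<p}" r] that by simp
  qed
  have "?ball r = 0" if "r \<le> 0"
  proof -
    have mono: "?ball r \<le> ennreal (unit_ball_vol (real p) * e ^ p)" if "0 < e" for e
    proof -
      have "?ball r \<le> ?ball e"
        using \<open>r \<le> 0\<close> that by (intro emeasure_mono) auto
      with ball[OF that] show ?thesis
        by simp
    qed
    have "((\<lambda>e. ennreal (unit_ball_vol (real p) * e ^ p)) \<longlongrightarrow> 0) (at_right 0)"
      using assms by (auto intro!: tendsto_eq_intros tendsto_ennrealI simp: power_0_left)
    then have "?ball r \<le> 0"
      by (rule tendsto_lowerbound) (auto intro!: eventually_at_rightI[of 0 1] mono)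
    then show ?thesis by simp
  qed
  with ball show ?thesis by auto
qed

text \<open>The surface area of the sphere of radius \<open>r\<close> in \<open>\<real>^p\<close>, i.e. the derivative of the
  ball volume \<open>\<omega>_p r^p\<close>.\<close>
definition radial_density :: "nat \<Rightarrow> real \<Rightarrow> real" where
  "radial_density p r = indicator {0..} r * (real p * unit_ball_vol (real p) * r ^ (p - 1))"

lemma radial_density_measurable [measurable]: "radial_density p \<in> borel_measurable borel"
  unfolding radial_density_def by measurable

lemma radial_density_nonneg: "0 \<le> radial_density p r"
  by (simp add: radial_density_def indicator_def)

lemma emeasure_density_radial_density_atMost:
  assumes "1 \<le> p"
  shows "emeasure (density lborel (radial_density p)) {..a} =
    (if a \<le> 0 then 0 else ennreal (unit_ball_vol (real p) * a ^ p))"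
proof -
  have "emeasure (density lborel (radial_density p)) {..a} =
      (\<integral>\<^sup>+ r. ennreal (real p * unit_ball_vol (real p) * r ^ (p - 1)) * indicator {0..a} r \<partial>lborel)"
    by (subst emeasure_density) (auto intro!: nn_integral_cong simp: radial_density_def indicator_def)
  also have "\<dots> = (if a \<le> 0 then 0 else ennreal (unit_ball_vol (real p) * a ^ p))"
  proof (cases "a \<le> 0")
    case True
    have "AE r in lborel. ennreal (real p * unit_ball_vol (real p) * r ^ (p - 1)) * indicator {0..a} r = 0"
      using AE_lborel_singleton[of 0] by eventually_elim (use True in \<open>auto simp: indicator_def\<close>)
    with True show ?thesis
      by (simp add: nn_integral_0_iff_AE)
  next
    case False
    have "(\<integral>\<^sup>+ r. ennreal (real p * unit_ball_vol (real p) * r ^ (p - 1)) * indicator {0..a} r \<partial>lborel) =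
        ennreal (unit_ball_vol (real p) * a ^ p - unit_ball_vol (real p) * 0 ^ p)"
      using False by (intro nn_integral_FTC_Icc) (auto intro!: derivative_eq_intros)
    with False assms show ?thesis
      by (simp add: power_0_left)
  qed
  finally show ?thesis .
qed

lemma distr_enorm:
  assumes "1 \<le> p"
  shows "distr (lborel_Pi p) borel (enorm p) = density lborel (radial_density p)"
proof (rule measure_eqI_generator_eq_countable[where E = "range atMost" and \<Omega> = UNIV
      and A = "range (\<lambda>n::nat. {..real n})"])
  have atMost: "emeasure (distr (lborel_Pi p) borel (enorm p)) {..a} =
      (if a \<le> 0 then 0 else ennreal (unit_ball_vol (real p) * a ^ p))" for a
    using emeasure_enorm_atMost[OF assms, of a] by (subst emeasure_distr) (auto simp: vimage_def Int_def conj_commute)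
  show "emeasure (distr (lborel_Pi p) borel (enorm p)) X = emeasure (density lborel (radial_density p)) X"
    if "X \<in> range atMost" for X
    using that atMost emeasure_density_radial_density_atMost[OF assms] by auto
  show "emeasure (distr (lborel_Pi p) borel (enorm p)) X \<noteq> \<infinity>"
    if "X \<in> range (\<lambda>n::nat. {..real n})" for X
    using that atMost by (auto split: if_split_asm)
  show "sets (distr (lborel_Pi p) borel (enorm p)) = sigma_sets UNIV (range atMost)"
    "sets (density lborel (radial_density p)) = sigma_sets UNIV (range atMost)"
    by (simp_all only: sets_distr sets_density sets_lborel) (simp_all add: borel_eq_atMost)
  show "\<Union> (range (\<lambda>n::nat. {..real n})) = UNIV"
    by (auto intro: real_arch_simple)
qed (auto simp: Int_stable_def)

lemma nn_integral_enorm: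
  assumes "1 \<le> p" and [measurable]: "g \<in> borel_measurable borel"
  shows "(\<integral>\<^sup>+ l. g (enorm p l) \<partial>lborel_Pi p) = (\<integral>\<^sup>+ r. ennreal (radial_density p r) * g r \<partial>lborel)"
proof -
  have "(\<integral>\<^sup>+ l. g (enorm p l) \<partial>lborel_Pi p) = (\<integral>\<^sup>+ r. g r \<partial>distr (lborel_Pi p) borel (enorm p))"
    by (rule nn_integral_distr[symmetric]) auto
  then show ?thesis
    by (simp add: distr_enorm[OF assms(1)] nn_integral_density)
qed

definition gauss_tail_moment :: "nat \<Rightarrow> real \<Rightarrow> ennreal" where
  "gauss_tail_moment m B = (\<integral>\<^sup>+ r. ennreal (r ^ m * exp (- r\<^sup>2 / 2)) * indicator {B..} r \<partial>lborel)"

lemma nn_integral_gauss_tail_FTC: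
  assumes "0 \<le> B" and "real n \<le> B\<^sup>2"
  shows "(\<integral>\<^sup>+ r. ennreal ((r ^ (n + 1) - real n * r ^ (n - 1)) * exp (- r\<^sup>2 / 2)) * indicator {B..} r \<partial>lborel) =
    ennreal (B ^ n * exp (- B\<^sup>2 / 2))"
proof -
  have "((\<lambda>r. - (r ^ n * exp (- r\<^sup>2 / 2))) has_real_derivative
      (x ^ (n + 1) - real n * x ^ (n - 1)) * exp (- x\<^sup>2 / 2)) (at x)" for x :: real
    by (auto intro!: derivative_eq_intros simp: power2_eq_square algebra_simps)
  moreover have "0 \<le> x ^ (n + 1) - real n * x ^ (n - 1)" if "B \<le> x" for x
  proof (cases n)
    case (Suc m)
    have "real n \<le> x\<^sup>2"
      using assms that power_mono[of B x 2] by linarith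
    then have "real n * x ^ m \<le> x\<^sup>2 * x ^ m"
      using assms that by (intro mult_right_mono) auto
    then show ?thesis
      using Suc by (simp add: power2_eq_square algebra_simps)
  qed (use assms that in simp)
  moreover have "((\<lambda>r::real. - (r ^ n * exp (- r\<^sup>2 / 2))) \<longlongrightarrow> 0) at_top"
    by real_asymp
  ultimately show ?thesis
    by (subst nn_integral_FTC_atLeast) (auto intro!: mult_nonneg_nonneg)
qed

lemma gauss_tail_moment_lower:
  assumes "0 \<le> B"
  shows "ennreal (B ^ n * exp (- B\<^sup>2 / 2)) \<le> gauss_tail_moment (n + 1) B"
proof -
  have "ennreal (B ^ n * exp (- B\<^sup>2 / 2)) =
      ennreal (B ^ n) * (\<integral>\<^sup>+ r. ennreal (r * exp (- r\<^sup>2 / 2)) * indicator {B..} r \<partial>lborel)"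
    using nn_integral_gauss_tail_FTC[OF assms, of 0] assms by (simp add: ennreal_mult)
  also have "\<dots> = (\<integral>\<^sup>+ r. ennreal (B ^ n * r * exp (- r\<^sup>2 / 2)) * indicator {B..} r \<partial>lborel)"
    using assms by (subst nn_integral_cmult[symmetric]) (auto simp: ennreal_mult' mult.assoc)
  also have "\<dots> \<le> gauss_tail_moment (n + 1) B"
    unfolding gauss_tail_moment_def
  proof (intro nn_integral_mono)
    fix r
    have "B ^ n * r \<le> r ^ n * r" if "B \<le> r"
      using assms that power_mono[of B r n] by (intro mult_right_mono) auto
    then show "ennreal (B ^ n * r * exp (- r\<^sup>2 / 2)) * indicator {B..} r \<le>
        ennreal (r ^ (n + 1) * exp (- r\<^sup>2 / 2)) * indicator {B..} r"
      by (auto simp: indicator_def mult.commute intro!: ennreal_leI mult_right_mono)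
  qed
  finally show ?thesis .
qed

lemma gauss_tail_moment_upper:
  assumes "0 \<le> B" and "0 \<le> a" and "a < 1" and "real n \<le> a * B\<^sup>2"
  shows "gauss_tail_moment (n + 1) B \<le> ennreal (B ^ n * exp (- B\<^sup>2 / 2) / (1 - a))"
proof -
  have nB: "real n \<le> B\<^sup>2"
    using assms mult_right_mono[of a 1 "B\<^sup>2"] by simp
  have "gauss_tail_moment (n + 1) B \<le> (\<integral>\<^sup>+ r. ennreal (1 / (1 - a)) *
      (ennreal ((r ^ (n + 1) - real n * r ^ (n - 1)) * exp (- r\<^sup>2 / 2)) * indicator {B..} r) \<partial>lborel)"
    unfolding gauss_tail_moment_def
  proof (intro nn_integral_mono)
    fix r
    show "ennreal (r ^ (n + 1) * exp (- r\<^sup>2 / 2)) * indicator {B..} r \<le> ennreal (1 / (1 - a)) *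
        (ennreal ((r ^ (n + 1) - real n * r ^ (n - 1)) * exp (- r\<^sup>2 / 2)) * indicator {B..} r)"
    proof (cases "B \<le> r")
      case True
      have "(1 - a) * r ^ (n + 1) \<le> r ^ (n + 1) - real n * r ^ (n - 1)"
      proof (cases n)
        case (Suc m)
        have "real n \<le> a * r\<^sup>2"
          using assms True power_mono[of B r 2] mult_left_mono[of "B\<^sup>2" "r\<^sup>2" a] by linarith
        then have "real n * r ^ m \<le> a * r\<^sup>2 * r ^ m"
          using assms True by (intro mult_right_mono) auto
        then show ?thesis
          using Suc by (simp add: power2_eq_square algebra_simps)
      qed (use assms True in \<open>simp add: algebra_simps\<close>)
      then have "r ^ (n + 1) * exp (- r\<^sup>2 / 2) \<le>
          1 / (1 - a) * ((r ^ (n + 1) - real n * r ^ (n - 1)) * exp (- r\<^sup>2 / 2))"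
        using assms by (simp add: field_simps)
      with True assms show ?thesis
        by (simp add: ennreal_mult'[symmetric] ennreal_leI)
    qed simp
  qed
  also have "\<dots> = ennreal (1 / (1 - a)) * ennreal (B ^ n * exp (- B\<^sup>2 / 2))"
    using nn_integral_gauss_tail_FTC[OF assms(1) nB] by (subst nn_integral_cmult) auto
  also have "\<dots> = ennreal (B ^ n * exp (- B\<^sup>2 / 2) / (1 - a))"
    using assms by (simp add: ennreal_mult[symmetric])
  finally show ?thesis .
qed

lemma unit_ball_vol_add_two:
  "unit_ball_vol (real q + 2) = unit_ball_vol (real q) * (2 * pi) / (real q + 2)"
proof -
  have Gamma: "Gamma ((real q + 2) / 2 + 1) = (real q / 2 + 1) * Gamma (real q / 2 + 1)"
    using Gamma_plus1[of "real q / 2 + 1"] by (simp add: add_divide_distrib add.assoc nonpos_Ints_def)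
  have powr: "pi powr ((real q + 2) / 2) = pi * pi powr (real q / 2)"
    by (simp add: add_divide_distrib powr_add)
  have "Gamma (real q / 2 + 1) > 0"
    by (intro Gamma_real_pos) auto
  then show ?thesis
    unfolding unit_ball_vol_def Gamma powr by (simp add: field_simps)
qed

definition gauss_radial_const :: "nat \<Rightarrow> real" where
  "gauss_radial_const p =
    real p * unit_ball_vol (real p) * (2 * pi) powr (- real p / 2) * real (dfact (p - 2))"

lemma gauss_radial_const_add_two:
  assumes "2 \<le> q"
  shows "gauss_radial_const (q + 2) = gauss_radial_const q"
proof -
  have "real (dfact q) = real q * real (dfact (q - 2))"
    using assms by (cases q rule: dfact.cases) (auto simp: algebra_simps)
  moreover have "(2 * pi) powr (- real (q + 2) / 2) = (2 * pi) powr (- real q / 2) / (2 * pi)"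
  proof -
    have "- real (q + 2) / 2 = - real q / 2 + (-1)"
      by (simp add: field_simps)
    then show ?thesis
      by (simp only: powr_add) (simp add: powr_neg_one)
  qed
  moreover have "unit_ball_vol (real (q + 2)) = unit_ball_vol (real q) * (2 * pi) / (real q + 2)"
    using unit_ball_vol_add_two[of q] by (simp add: add.commute)
  ultimately show ?thesis
    unfolding gauss_radial_const_def by (simp add: field_simps)
qed

lemma gauss_radial_const_2: "gauss_radial_const 2 = 1"
  using unit_ball_vol_even[of 1] by (simp add: gauss_radial_const_def powr_neg_one)

lemma gauss_radial_const_3: "gauss_radial_const 3 = sqrt (2 / pi)"
proof -
  have ball: "unit_ball_vol (real 3) = 4 * pi / 3"
    using unit_ball_vol_odd'[of 1] by (simp add: pochhammer_Suc_prod numeral_3_eq_3)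
  have "(2 * pi) powr (- real 3 / 2) = (2 * pi) powr (-1) * (2 * pi) powr (-1/2)"
    using powr_add[of "2 * pi" "-1" "-1/2"] by simp
  also have "\<dots> = 1 / (2 * pi * sqrt (2 * pi))"
    by (simp add: powr_neg_one powr_minus_divide powr_half_sqrt)
  finally have "gauss_radial_const 3 = 2 / sqrt (2 * pi)"
    unfolding gauss_radial_const_def ball by (simp add: numeral_3_eq_3 field_simps)
  also have "\<dots> = sqrt (2 / pi)"
    by (simp add: real_sqrt_divide real_sqrt_mult field_simps)
  finally show ?thesis .
qed

lemma gauss_radial_const_bounds:
  assumes "2 \<le> p"
  shows "sqrt (2 / pi) \<le> gauss_radial_const p \<and> gauss_radial_const p \<le> 1"
  using assms
proof (induction p rule: less_induct)
  case (less p)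
  show ?case
  proof (cases "4 \<le> p")
    case True
    then have "gauss_radial_const (p - 2 + 2) = gauss_radial_const (p - 2)"
      by (intro gauss_radial_const_add_two) simp
    moreover have "p - 2 + 2 = p"
      using True by simp
    ultimately have "gauss_radial_const p = gauss_radial_const (p - 2)"
      by simp
    with True less.IH[of "p - 2"] show ?thesis
      by simp
  next
    case False
    with less.prems have "p = 2 \<or> p = 3"
      by auto
    with pi_gt3 show ?thesis
      by (auto simp: gauss_radial_const_2 gauss_radial_const_3)
  qed
qed

lemma dfact_pos: "0 < dfact n"
  by (induction n rule: dfact.induct) auto

lemma gauss_tail_integral_eq:
  assumes "1 \<le> p" and "0 \<le> B"
  shows "(\<integral>l. indicator {l. B < enorm p l} l * std_gauss p l * enorm p l ^ K \<partial>lborel_Pi p) =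
    gauss_radial_const p / real (dfact (p - 2)) * enn2real (gauss_tail_moment (p - 1 + K) B)"
proof -
  define C where "C = real p * unit_ball_vol (real p) * (2 * pi) powr (- real p / 2)"
  define g where "g r = indicator {B<..} r * (2 * pi) powr (- real p / 2) * exp (- r\<^sup>2 / 2) * r ^ K"
    for r :: real
  have g_nonneg: "0 \<le> g r" for r
    using assms(2) by (auto simp: g_def indicator_def intro!: mult_nonneg_nonneg)
  have "(\<integral>l. indicator {l. B < enorm p l} l * std_gauss p l * enorm p l ^ K \<partial>lborel_Pi p) =
      (\<integral>l. g (enorm p l) \<partial>lborel_Pi p)"
    by (simp add: g_def std_gauss_def indicator_def mult.assoc)
  also have "\<dots> = enn2real (\<integral>\<^sup>+ l. ennreal (g (enorm p l)) \<partial>lborel_Pi p)"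
    using g_nonneg by (intro integral_eq_nn_integral) (auto simp: g_def)
  also have "(\<integral>\<^sup>+ l. ennreal (g (enorm p l)) \<partial>lborel_Pi p) =
      (\<integral>\<^sup>+ r. ennreal (radial_density p r) * ennreal (g r) \<partial>lborel)"
    using assms(1) by (rule nn_integral_enorm) (simp add: g_def)
  also have "\<dots> = (\<integral>\<^sup>+ r. ennreal C *
      (ennreal (r ^ (p - 1 + K) * exp (- r\<^sup>2 / 2)) * indicator {B..} r) \<partial>lborel)"
    using AE_lborel_singleton[of B]
  proof (intro nn_integral_cong_AE, eventually_elim)
    case (elim r)
    show ?case
    proof (cases "B < r")
      case True
      then have "0 \<le> r"
        using assms by simp
      have "radial_density p r * g r = C * ((r ^ (p - 1) * r ^ K) * exp (- r\<^sup>2 / 2))"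
        using True \<open>0 \<le> r\<close> by (simp add: radial_density_def g_def C_def ac_simps)
      also have "\<dots> = C * (r ^ (p - 1 + K) * exp (- r\<^sup>2 / 2))"
        by (simp only: power_add)
      finally show ?thesis
        using True \<open>0 \<le> r\<close> radial_density_nonneg g_nonneg
        by (simp add: C_def ennreal_mult[symmetric])
    qed (use elim g_def in \<open>simp add: indicator_def\<close>)
  qed
  also have "\<dots> = ennreal C * gauss_tail_moment (p - 1 + K) B"
    unfolding gauss_tail_moment_def by (rule nn_integral_cmult) simp
  finally show ?thesis
    using dfact_pos[of "p - 2"] by (simp add: C_def gauss_radial_const_def enn2real_mult)
qed

lemma enn2real_gauss_tail_moment_bounds:
  assumes "0 \<le> B" and "0 \<le> a" and "a < 1" and "real n \<le> a * B\<^sup>2"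
  shows "B ^ n * exp (- B\<^sup>2 / 2) \<le> enn2real (gauss_tail_moment (n + 1) B)"
    and "enn2real (gauss_tail_moment (n + 1) B) \<le> B ^ n * exp (- B\<^sup>2 / 2) / (1 - a)"
proof -
  have upper: "gauss_tail_moment (n + 1) B \<le> ennreal (B ^ n * exp (- B\<^sup>2 / 2) / (1 - a))"
    using assms by (rule gauss_tail_moment_upper)
  then have "gauss_tail_moment (n + 1) B < top"
    using ennreal_less_top by (rule le_less_trans)
  with gauss_tail_moment_lower[OF assms(1), of n]
  show "B ^ n * exp (- B\<^sup>2 / 2) \<le> enn2real (gauss_tail_moment (n + 1) B)"
    using assms(1) enn2real_mono by fastforce
  show "enn2real (gauss_tail_moment (n + 1) B) \<le> B ^ n * exp (- B\<^sup>2 / 2) / (1 - a)"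
    using enn2real_mono[OF upper] assms by simp
qed

lemma gauss_tail_integral_bounds:
  assumes "2 \<le> p" and "0 \<le> B" and "0 \<le> a" and "a < 1" and "real (p - 2 + K) \<le> a * B\<^sup>2"
  defines "L \<equiv> \<integral>l. indicator {l. B < enorm p l} l * std_gauss p l * enorm p l ^ K \<partial>lborel_Pi p"
    and "R \<equiv> B ^ (p - 2 + K) / real (dfact (p - 2)) * exp (- B\<^sup>2 / 2)"
  shows "sqrt (2 / pi) * R \<le> L" and "L \<le> 1 / (1 - a) * R"
proof -
  define n where "n = p - 2 + K"
  define lo where "lo = B ^ n * exp (- B\<^sup>2 / 2)"
  define t where "t = enn2real (gauss_tail_moment (n + 1) B)"
  define D where "D = gauss_radial_const p"
  define d where "d = real (dfact (p - 2))"
  have t: "lo \<le> t" "t \<le> lo / (1 - a)"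
    using enn2real_gauss_tail_moment_bounds[OF assms(2-4)] assms(5)
    by (simp_all add: lo_def t_def n_def)
  have D: "sqrt (2 / pi) \<le> D" "D \<le> 1"
    using gauss_radial_const_bounds[OF assms(1)] by (simp_all add: D_def)
  have "0 \<le> lo" and "0 < d"
    using assms(2) dfact_pos by (simp_all add: lo_def d_def)
  have "p - 1 + K = n + 1"
    using assms(1) by (simp add: n_def)
  then have L: "L = D * t / d"
    using gauss_tail_integral_eq[of p B K] assms(1,2) by (simp add: L_def D_def t_def d_def)
  have R: "R = lo / d"
    by (simp add: R_def lo_def d_def n_def)
  have "sqrt (2 / pi) * lo \<le> D * t"
    by (intro mult_mono D t \<open>0 \<le> lo\<close> order_trans[OF _ D(1)]) simp
  with \<open>0 < d\<close> show "sqrt (2 / pi) * R \<le> L"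
    unfolding L R by (simp add: divide_right_mono)
  have "D * t \<le> 1 * (lo / (1 - a))"
    using D(2) t(2) by (rule mult_mono) (use t(1) \<open>0 \<le> lo\<close> in simp_all)
  then have "D * t / d \<le> lo / (1 - a) / d"
    using \<open>0 < d\<close> by (intro divide_right_mono) simp_all
  then show "L \<le> 1 / (1 - a) * R"
    unfolding L R by simp
qed

theorem lemma3:
  fixes \<alpha> :: real
  assumes "0 < \<alpha>" and "\<alpha> < 1"
  shows "\<exists>c1 c2. 0 < c1 \<and> 0 < c2 \<and>
    (\<forall>(p::nat) (K::nat) (B::real). 2 \<le> p \<and> 0 < B \<and> (real p - 1 + real K) / B\<^sup>2 \<le> \<alpha> \<longrightarrow>
      (let L = (\<integral>l. indicator {l. B < enorm p l} l * std_gauss p l * enorm p l ^ K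
                   \<partial>(PiM {..<p} (\<lambda>_. lborel)));
           R = B ^ (p - 2 + K) / real (dfact (p - 2)) * exp (- B\<^sup>2 / 2)
       in c1 * R \<le> L \<and> L \<le> c2 * R))"
proof (intro exI conjI allI impI)
  fix p K :: nat and B :: real
  assume "2 \<le> p \<and> 0 < B \<and> (real p - 1 + real K) / B\<^sup>2 \<le> \<alpha>"
  then have "2 \<le> p" and "0 < B" and "real (p - 2 + K) \<le> \<alpha> * B\<^sup>2"
    by (auto simp: pos_divide_le_eq of_nat_diff)
  with assms show "let L = \<integral>l. indicator {l. B < enorm p l} l * std_gauss p l * enorm p l ^ K \<partial>lborel_Pi p;
      R = B ^ (p - 2 + K) / real (dfact (p - 2)) * exp (- B\<^sup>2 / 2)
    in sqrt (2 / pi) * R \<le> L \<and> L \<le> 1 / (1 - \<alpha>) * R"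
    unfolding Let_def by (intro conjI gauss_tail_integral_bounds) simp_all
qed (use assms in auto)

end
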